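(* Consider the system $x^+=f(x,u)$, $y=h(x)$ with $f:\mathcal{X}\times\mathcal{U}\to\mathcal{X}$, $h:\mathcal{X}\to\mathcal{Y}$, $\mathcal{X}\subset\mathbb{R}^n$, $\mathcal{Y}\subset\mathbb{R}^m$, $\mathcal{U}\subset\mathbb{R}^q$. Suppose: (A1) there exists an integer $p\ge1$ such that for every $x\in\mathcal{X}$ the set $[x]_{p-1}$ is either a singleton or empty; and (A2) for all $x,\hat x\in\mathcal{X}$ and all $k\ge0$, $\hat x\in[x]_k^+$ implies $[\hat x]_k^+=[x]_k^+$. With $p$ as in (A1), let $\pi(\hat x,y):=\max\{j\in\{-1,0,\ldots,p-2\}:[\hat x]_j^+\cap h^{-1}(y)\ne\emptyset\}$. Then the system $$\hat x^+\in f\big([\hat x]^+_{\pi(\hat x,y)}\cap h^{-1}(y),\,u\big)$$ is a deadbeat observer for $x^+=f(x,u)$, $y=h(x)$.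
   Context: $h^{-1}(y):=\{\eta\in\mathcal{X}:h(\eta)=y\}$; $f(S,u):=\{f(s,u):s\in S\}$; for a set $S$, $[S]_k:=\bigcup_{s\in S}[s]_k$. Define $[x]_0:=h^{-1}(h(x))$, and for $k\ge0$: $[x]_k^+:=\bigcup_{(\eta,u)\in\mathcal{X}\times\mathcal{U}:\ f(\eta,u)=x} f([\eta]_k,u)$, $[x]_{k+1}:=[x]_k^+\cap[x]_0$; additionally $[x]_{-1}^+:=\mathcal{X}$. For an input sequence $\mathbf{u}=(u_0,u_1,\ldots)$ with $u_k\in\mathcal{U}$, the solution is $\phi(0,x,\mathbf{u})=x$, $\phi(k+1,x,\mathbf{u})=f(\phi(k,x,\mathbf{u}),u_k)$. Given $g:\mathcal{X}\times\mathcal{Y}\times\mathcal{U}\rightrightarrows\mathcal{X}$, a solution of $\hat x^+\in g(\hat x,h(x),u)$ is any sequence $\psi(k,\hat x,x,\mathbf{u})$ with $\psi(0,\hat x,x,\mathbf{u})=\hat x$, $\psi(k+1,\hat x,x,\mathbf{u})\in g(\psi(k,\hat x,x,\mathbf{u}),h(\phi(k,x,\mathbf{u})),u_k)$. The system $\hat x^+\in g(\hat x,y,u)$ is a deadbeat observer for $x^+=f(x,u),\,y=h(x)$ if there is an integer $q\ge1$ such that such solutions satisfy $\psi(k,\hat x,x,\mathbf{u})=\phi(k,x,\mathbf{u})$ for all $x,\hat x\in\mathcal{X}$, all input sequences $\mathbf{u}$, and all $k\ge q$. *)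

theory Defs
  imports "HOL-Analysis.Analysis"
begin

definition preim :: "'x set \<Rightarrow> ('x \<Rightarrow> 'y) \<Rightarrow> 'y \<Rightarrow> 'x set" where
  "preim X h y = {\<eta> \<in> X. h \<eta> = y}"

text \<open>cls X U f h k x is [x]_k:  [x]_0 = h^{-1}(h x),
  [x]_{k+1} = [x]_k^+ \<inter> [x]_0, with [x]_k^+ the union of f([\<eta>]_k,u) over (\<eta>,u) in X \<times> U with f \<eta> u = x.\<close>
primrec cls :: "'x set \<Rightarrow> 'u set \<Rightarrow> ('x \<Rightarrow> 'u \<Rightarrow> 'x) \<Rightarrow> ('x \<Rightarrow> 'y) \<Rightarrow> nat \<Rightarrow> 'x \<Rightarrow> 'x set" where
  "cls X U f h 0 x = preim X h (h x)"
| "cls X U f h (Suc k) x =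
     (\<Union>{(\<lambda>s. f s u) ` cls X U f h k \<eta> | \<eta> u. \<eta> \<in> X \<and> u \<in> U \<and> f \<eta> u = x})
     \<inter> preim X h (h x)"

definition clsp :: "'x set \<Rightarrow> 'u set \<Rightarrow> ('x \<Rightarrow> 'u \<Rightarrow> 'x) \<Rightarrow> ('x \<Rightarrow> 'y) \<Rightarrow> nat \<Rightarrow> 'x \<Rightarrow> 'x set" where
  "clsp X U f h k x =
     \<Union>{(\<lambda>s. f s u) ` cls X U f h k \<eta> | \<eta> u. \<eta> \<in> X \<and> u \<in> U \<and> f \<eta> u = x}"

definition clspi :: "'x set \<Rightarrow> 'u set \<Rightarrow> ('x \<Rightarrow> 'u \<Rightarrow> 'x) \<Rightarrow> ('x \<Rightarrow> 'y) \<Rightarrow> int \<Rightarrow> 'x \<Rightarrow> 'x set" where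
  "clspi X U f h j x = (if j < 0 then X else clsp X U f h (nat j) x)"

definition piidx :: "'x set \<Rightarrow> 'u set \<Rightarrow> ('x \<Rightarrow> 'u \<Rightarrow> 'x) \<Rightarrow> ('x \<Rightarrow> 'y) \<Rightarrow> nat \<Rightarrow> 'x \<Rightarrow> 'y \<Rightarrow> int" where
  "piidx X U f h p xh y =
     Max {j \<in> {-1 .. int p - 2}. clspi X U f h j xh \<inter> preim X h y \<noteq> {}}"

definition obs :: "'x set \<Rightarrow> 'u set \<Rightarrow> ('x \<Rightarrow> 'u \<Rightarrow> 'x) \<Rightarrow> ('x \<Rightarrow> 'y) \<Rightarrow> nat \<Rightarrow> 'x \<Rightarrow> 'y \<Rightarrow> 'u \<Rightarrow> 'x set" where
  "obs X U f h p xh y u =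
     (\<lambda>s. f s u) ` (clspi X U f h (piidx X U f h p xh y) xh \<inter> preim X h y)"

primrec traj :: "('x \<Rightarrow> 'u \<Rightarrow> 'x) \<Rightarrow> nat \<Rightarrow> 'x \<Rightarrow> (nat \<Rightarrow> 'u) \<Rightarrow> 'x" where
  "traj f 0 x us = x"
| "traj f (Suc k) x us = f (traj f k x us) (us k)"

definition deadbeat_observer ::
  "'x set \<Rightarrow> 'u set \<Rightarrow> ('x \<Rightarrow> 'u \<Rightarrow> 'x) \<Rightarrow> ('x \<Rightarrow> 'y) \<Rightarrow> ('x \<Rightarrow> 'y \<Rightarrow> 'u \<Rightarrow> 'x set) \<Rightarrow> bool" where
  "deadbeat_observer X U f h g \<longleftrightarrow>
     (\<exists>q::nat. q \<ge> 1 \<and>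
       (\<forall>x \<in> X. \<forall>xh \<in> X. \<forall>us :: nat \<Rightarrow> 'u. (\<forall>k. us k \<in> U) \<longrightarrow>
         (\<forall>psi :: nat \<Rightarrow> 'x. psi 0 = xh \<and>
              (\<forall>k. psi (Suc k) \<in> g (psi k) (h (traj f k x us)) (us k)) \<longrightarrow>
            (\<forall>k \<ge> q. psi k = traj f k x us))))"

end

theory Submission
  imports Defs
begin

text \<open>
  Let \<open>x\<^sub>k\<close> be the true trajectory and \<open>\<psi>\<close> an observer solution.  Every
  observer step picks a point \<open>s\<^sub>k\<close> with \<open>\<psi>(k+1) = f s\<^sub>k u\<^sub>k\<close>; we show the invariant
  \<open>s\<^sub>k \<in> [x\<^sub>k]_{min k (p-1)}\<close>.  For the step: \<open>s\<^sub>k \<in> [x\<^sub>k]_m\<close> gives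
  \<open>\<psi>(k+1) \<in> [x\<^sub>{k+1}]\<^sup>+_m\<close>, so by (A2) the sets \<open>[\<psi>(k+1)]\<^sup>+_m\<close> and \<open>[x\<^sub>{k+1}]\<^sup>+_m\<close> agree;
  since \<open>x\<^sub>{k+1}\<close> lies in the latter and in \<open>h\<^sup>-\<^sup>1(y\<^sub>{k+1})\<close>, the index \<open>\<pi>\<close> is at least \<open>m\<close>,
  hence \<open>s\<^sub>{k+1} \<in> [x\<^sub>{k+1}]\<^sup>+_m \<inter> h\<^sup>-\<^sup>1(y\<^sub>{k+1}) = [x\<^sub>{k+1}]_{m+1}\<close> by monotonicity.
  Once \<open>k \<ge> p-1\<close>, both \<open>s\<^sub>k\<close> and \<open>x\<^sub>k\<close> lie in \<open>[x\<^sub>k]_{p-1}\<close>, a singleton by (A1), so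
  \<open>\<psi>(k+1) = f x\<^sub>k u\<^sub>k = x\<^sub>{k+1}\<close>; thus \<open>q = p\<close> works.
\<close>

lemma cls_Suc_eq: "cls X U f h (Suc k) x = clsp X U f h k x \<inter> preim X h (h x)"
  by (simp add: clsp_def)

lemma cls_subset_X: "cls X U f h k x \<subseteq> X"
  by (cases k) (auto simp: preim_def)

lemma cls_Suc_subset: "cls X U f h (Suc k) x \<subseteq> cls X U f h k x"
proof (induction k arbitrary: x)
  case 0
  show ?case by auto
next
  case (Suc k)
  have "clsp X U f h (Suc k) x \<subseteq> clsp X U f h k x"
    unfolding clsp_def using Suc.IH by blast
  then show ?case unfolding cls_Suc_eq[of _ _ _ _ "Suc k"] cls_Suc_eq[of _ _ _ _ k] by blast
qed

lemma cls_antimono: "j \<le> k \<Longrightarrow> cls X U f h k x \<subseteq> cls X U f h j x"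
  by (induction k rule: dec_induct) (use cls_Suc_subset in fastforce)+

lemma clsp_antimono:
  assumes "j \<le> k" shows "clsp X U f h k x \<subseteq> clsp X U f h j x"
  unfolding clsp_def using cls_antimono[OF assms, of X U f h] by blast

lemma clsp_image:
  "\<eta> \<in> X \<Longrightarrow> u \<in> U \<Longrightarrow> s \<in> cls X U f h k \<eta> \<Longrightarrow> f s u \<in> clsp X U f h k (f \<eta> u)"
  unfolding clsp_def by blast

lemma clspi_piidx_subset:
  assumes "int j \<le> int p - 2" and "clsp X U f h j xh \<inter> preim X h y \<noteq> {}"
  shows "clspi X U f h (piidx X U f h p xh y) xh \<subseteq> clsp X U f h j xh"
proof -
  let ?J = "{i \<in> {-1 .. int p - 2}. clspi X U f h i xh \<inter> preim X h y \<noteq> {}}"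
  have "finite ?J" by (rule finite_subset[of _ "{-1 .. int p - 2}"]) auto
  moreover have "int j \<in> ?J" using assms by (simp add: clspi_def)
  ultimately have "int j \<le> piidx X U f h p xh y"
    unfolding piidx_def by (rule Max_ge)
  then have "j \<le> nat (piidx X U f h p xh y)" and "\<not> piidx X U f h p xh y < 0"
    by linarith+
  then show ?thesis
    unfolding clspi_def by (simp add: clsp_antimono)
qed

lemma traj_in_X:
  "x \<in> X \<Longrightarrow> \<forall>k. us k \<in> U \<Longrightarrow> \<forall>x \<in> X. \<forall>u \<in> U. f x u \<in> X \<Longrightarrow> traj f k x us \<in> X"
  by (induction k) auto

lemma traj_in_cls:
  assumes x: "x \<in> X" and us: "\<forall>k. us k \<in> U" and f_maps: "\<forall>x \<in> X. \<forall>u \<in> U. f x u \<in> X"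
  shows "j \<le> k \<Longrightarrow> traj f k x us \<in> cls X U f h j (traj f k x us)"
proof (induction k arbitrary: j)
  case 0
  then show ?case using x by (simp add: preim_def)
next
  case (Suc k)
  have in_X: "traj f (Suc k) x us \<in> X" "traj f k x us \<in> X"
    using traj_in_X[OF x us f_maps] by blast+
  show ?case
  proof (cases j)
    case 0
    then show ?thesis using in_X by (simp add: preim_def)
  next
    case (Suc i)
    with Suc.prems Suc.IH have "traj f k x us \<in> cls X U f h i (traj f k x us)" by simp
    then have "traj f (Suc k) x us \<in> clsp X U f h i (traj f (Suc k) x us)"
      using clsp_image[OF in_X(2) us[rule_format]] by simp
    then show ?thesis unfolding Suc cls_Suc_eq using in_X by (simp add: preim_def)
  qed
qed

text \<open>Here \<open>s\<^sub>0 \<in> [\<xi>]_m\<close> is the current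
  pre-image, \<open>f \<xi> u\<close> the next true state, \<open>f s\<^sub>0 u\<close> the next estimate, and \<open>s\<close> the
  point chosen by the observer from \<open>[f s\<^sub>0 u]\<^sup>+_\<pi> \<inter> h\<^sup>-\<^sup>1(h (f \<xi> u))\<close>.\<close>
lemma observer_step:
  assumes f_maps: "\<forall>x \<in> X. \<forall>u \<in> U. f x u \<in> X"
    and A2: "\<forall>x \<in> X. \<forall>xh \<in> X. \<forall>k. xh \<in> clsp X U f h k x \<longrightarrow> clsp X U f h k xh = clsp X U f h k x"
    and \<xi>: "\<xi> \<in> X" and u: "u \<in> U" and m: "int m \<le> int p - 2"
    and s0: "s0 \<in> cls X U f h m \<xi>"
    and true_next: "f \<xi> u \<in> cls X U f h (Suc m) (f \<xi> u)"
    and s: "s \<in> clspi X U f h (piidx X U f h p (f s0 u) (h (f \<xi> u))) (f s0 u)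
               \<inter> preim X h (h (f \<xi> u))"
  shows "s \<in> cls X U f h (Suc m) (f \<xi> u)"
proof -
  have s0_X: "s0 \<in> X" using cls_subset_X s0 ..
  have next_X: "f \<xi> u \<in> X" "f s0 u \<in> X" using f_maps \<xi> s0_X u by blast+
  have "f s0 u \<in> clsp X U f h m (f \<xi> u)" using clsp_image[OF \<xi> u s0] .
  then have same: "clsp X U f h m (f s0 u) = clsp X U f h m (f \<xi> u)"
    using A2[rule_format, OF next_X] by simp
  have "f \<xi> u \<in> clsp X U f h m (f s0 u) \<inter> preim X h (h (f \<xi> u))"
    using true_next unfolding cls_Suc_eq same .
  then have "clsp X U f h m (f s0 u) \<inter> preim X h (h (f \<xi> u)) \<noteq> {}" by blast
  then have "clspi X U f h (piidx X U f h p (f s0 u) (h (f \<xi> u))) (f s0 u)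
               \<subseteq> clsp X U f h m (f s0 u)"
    by (rule clspi_piidx_subset[OF m])
  with s show ?thesis unfolding cls_Suc_eq same by blast
qed

lemma observer_tracks:
  assumes f_maps: "\<forall>x \<in> X. \<forall>u \<in> U. f x u \<in> X"
    and A2: "\<forall>x \<in> X. \<forall>xh \<in> X. \<forall>k. xh \<in> clsp X U f h k x \<longrightarrow> clsp X U f h k xh = clsp X U f h k x"
    and x: "x \<in> X" and us: "\<forall>k. us k \<in> U"
    and psi: "\<forall>k. psi (Suc k) \<in> obs X U f h p (psi k) (h (traj f k x us)) (us k)"
  shows "\<exists>s \<in> cls X U f h (min k (p - 1)) (traj f k x us). psi (Suc k) = f s (us k)"
proof (induction k)
  case 0
  from psi[rule_format, of 0] show ?case by (auto simp: obs_def)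
next
  case (Suc k)
  let ?x = "traj f k x us" and ?u = "us k"
  from Suc.IH obtain s0 where s0: "s0 \<in> cls X U f h (min k (p - 1)) ?x"
    and psi_k: "psi (Suc k) = f s0 ?u" by blast
  from psi[rule_format, of "Suc k"] obtain s
    where s: "s \<in> clspi X U f h (piidx X U f h p (f s0 ?u) (h (f ?x ?u))) (f s0 ?u)
                \<inter> preim X h (h (f ?x ?u))"
      and psi_Sk: "psi (Suc (Suc k)) = f s (us (Suc k))"
    unfolding obs_def psi_k by auto
  have "s \<in> cls X U f h (min (Suc k) (p - 1)) (f ?x ?u)"
  proof (cases "p \<le> 1")
    case True
    then show ?thesis using s by simp
  next
    case False
    let ?m = "min k (p - 2)"
    have "s \<in> cls X U f h (Suc ?m) (f ?x ?u)"
    proof (rule observer_step[OF f_maps A2 _ us[rule_format] _ _ _ s])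
      show "?x \<in> X" using traj_in_X[OF x us f_maps] .
      show "int ?m \<le> int p - 2" using False by simp
      have "?m \<le> min k (p - 1)" by simp
      from cls_antimono[OF this] s0 show "s0 \<in> cls X U f h ?m ?x" ..
      show "f ?x ?u \<in> cls X U f h (Suc ?m) (f ?x ?u)"
        using traj_in_cls[OF x us f_maps, of "Suc ?m" "Suc k"] by simp
    qed
    moreover have "Suc ?m = min (Suc k) (p - 1)" using False by simp
    ultimately show ?thesis by simp
  qed
  then show ?case using psi_Sk by auto
qed

theorem theorem4:
  fixes X :: "(real ^ 'n) set" and Y :: "(real ^ 'm) set" and U :: "(real ^ 'q) set"
    and f :: "real ^ 'n \<Rightarrow> real ^ 'q \<Rightarrow> real ^ 'n"
    and h :: "real ^ 'n \<Rightarrow> real ^ 'm"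
    and p :: nat
  assumes f_maps: "\<forall>x \<in> X. \<forall>u \<in> U. f x u \<in> X"
    and h_maps: "\<forall>x \<in> X. h x \<in> Y"
    and A1: "p \<ge> 1 \<and> (\<forall>x \<in> X. (\<exists>a. cls X U f h (p - 1) x = {a}) \<or> cls X U f h (p - 1) x = {})"
    and A2: "\<forall>x \<in> X. \<forall>xh \<in> X. \<forall>k. xh \<in> clsp X U f h k x \<longrightarrow> clsp X U f h k xh = clsp X U f h k x"
  shows "deadbeat_observer X U f h (obs X U f h p)"
  unfolding deadbeat_observer_def
proof (intro exI[of _ p] conjI ballI allI impI)
  show "1 \<le> p" using A1 by simp
  fix x xh us psi k
  assume x: "x \<in> X" and us: "\<forall>k. us k \<in> U" and k: "p \<le> k"
    and psi: "psi 0 = xh \<and> (\<forall>k. psi (Suc k) \<in> obs X U f h p (psi k) (h (traj f k x us)) (us k))"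
  obtain k' where k': "k = Suc k'" and full: "min k' (p - 1) = p - 1"
    using k A1 by (cases k) auto
  let ?x = "traj f k' x us"
  have "\<exists>s \<in> cls X U f h (min k' (p - 1)) ?x. psi (Suc k') = f s (us k')"
    using observer_tracks[OF f_maps A2 x us] psi by blast
  then obtain s where s: "s \<in> cls X U f h (p - 1) ?x" and psi_k: "psi k = f s (us k')"
    unfolding full k' by blast
  have "p - 1 \<le> k'" using k k' by simp
  then have "?x \<in> cls X U f h (p - 1) ?x" by (rule traj_in_cls[OF x us f_maps])
  moreover have "?x \<in> X" using traj_in_X[OF x us f_maps] .
  ultimately have "s = ?x" using A1 s by (metis empty_iff singletonD)
  then show "psi k = traj f k x us" using psi_k k' by simp
qed

end
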